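(* Let $(X,d)$ be a compact metric space, $k\geq1$, and $T:\mathbb{Z}^k\times X\to X$ a continuous action, and let $c>0$ be such that any two distinct $x,y\in X$ satisfy $\sup_{u\in\mathbb{Z}^k}d(T^ux,T^uy)>2c$. Then there exists $\delta>0$ such that whenever $N\geq1$ and $x,y\in X$ satisfy $c\leq d^T_{[-N,N]^k}(x,y)\leq 2c$, we have $d^T_{\partial[-N,N]^k}(x,y)>\delta$.
   Context: For $\Omega\subset\mathbb{R}^k$, $d^T_\Omega(x,y)=\sup_{u\in\Omega\cap\mathbb{Z}^k}d(T^ux,T^uy)$. $\partial[-N,N]^k=\bigcup_{i=1}^k\{x\in[-N,N]^k: x_i\in\{-N,N\}\}$. *)

theory Defs
  imports "HOL-Analysis.Analysis"
begin

text \<open>A (continuous) action of the group Z^k (as int ^ 'k) on a set X of a metric space.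
  Z^k carries the discrete topology, so continuity of the action amounts to continuity of each T u.\<close>
definition Zk_action :: "'a::metric_space set \<Rightarrow> (int ^ 'k \<Rightarrow> 'a \<Rightarrow> 'a) \<Rightarrow> bool" where
  "Zk_action X T \<longleftrightarrow>
     (\<forall>u. T u ` X \<subseteq> X) \<and>
     (\<forall>x\<in>X. T 0 x = x) \<and>
     (\<forall>u v. \<forall>x\<in>X. T (u + v) x = T u (T v x)) \<and>
     (\<forall>u. continuous_on X (T u))"

text \<open>d^T_Omega(x,y) = sup over lattice points u in Omega of d(T^u x, T^u y);
  Omega is given directly as its set of lattice points.\<close>
definition dT :: "(int ^ 'k \<Rightarrow> 'a::metric_space \<Rightarrow> 'a) \<Rightarrow> (int ^ 'k) set \<Rightarrow> 'a \<Rightarrow> 'a \<Rightarrow> real" where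
  "dT T \<Omega> x y = (SUP u\<in>\<Omega>. dist (T u x) (T u y))"

definition cube :: "nat \<Rightarrow> (int ^ 'k) set" where
  "cube N = {u. \<forall>i. \<bar>u $ i\<bar> \<le> int N}"

definition cube_boundary :: "nat \<Rightarrow> (int ^ 'k) set" where
  "cube_boundary N = {u \<in> cube N. \<exists>i. \<bar>u $ i\<bar> = int N}"

end

theory Submission
  imports Defs
begin

text \<open>Expansivity and compactness give a single window cube M: every pair at distance at least c/2
  is separated by more than 2c somewhere in cube M. Each T w is injective and continuous, so on
  the compact set of such pairs d(T w x, T w y) is bounded below by some \<delta> > 0, uniformly over
  the finitely many w in cube M. Now if c \<le> d^T_{[-N,N]^k}(x,y) \<le> 2c, pick u in the cube with
  d(T u x, T u y) > c/2 and w in cube M separating T u x, T u y by more than 2c; then u + w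
  leaves the cube. Clamping u + w back onto [-N,N]^k gives a boundary point v with v - u still
  in cube M, hence d(T v x, T v y) \<ge> \<delta>.\<close>

lemma finite_cube: "finite (cube N :: (int ^ 'k) set)"
proof -
  have "(cube N :: (int ^ 'k) set) \<subseteq> vec_lambda ` (Pi\<^sub>E UNIV (\<lambda>_. {-int N..int N}))"
  proof
    fix u :: "int ^ 'k" assume "u \<in> cube N"
    then have "\<bar>u $ i\<bar> \<le> int N" for i
      by (simp add: cube_def)
    then have "(\<lambda>i. u $ i) \<in> Pi\<^sub>E UNIV (\<lambda>_. {-int N..int N})"
      by (auto simp: abs_le_iff minus_le_iff)
    moreover have "u = vec_lambda (\<lambda>i. u $ i)"
      by simp
    ultimately show "u \<in> vec_lambda ` (Pi\<^sub>E UNIV (\<lambda>_. {-int N..int N}))"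
      by blast
  qed
  moreover have "finite (Pi\<^sub>E (UNIV::'k set) (\<lambda>_. {-int N..int N}))"
    by (intro finite_PiE) auto
  ultimately show ?thesis using finite_subset by blast
qed

lemma cube_ne_empty: "cube N \<noteq> {}"
proof -
  have "0 \<in> cube N" by (simp add: cube_def)
  then show ?thesis by blast
qed

lemma finite_subset_cube:
  assumes "finite (F :: (int ^ 'k) set)"
  obtains M where "F \<subseteq> cube M"
proof -
  define S where "S = insert 0 ((\<lambda>(u, i). nat \<bar>u $ i\<bar>) ` (F \<times> (UNIV :: 'k set)))"
  have "finite S" using assms by (simp add: S_def)
  have "\<bar>u $ i\<bar> \<le> int (Max S)" if "u \<in> F" for u i
  proof -
    have "nat \<bar>u $ i\<bar> \<le> Max S" using \<open>finite S\<close> that by (intro Max_ge) (auto simp: S_def)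
    then show ?thesis by (simp add: nat_le_iff)
  qed
  then show ?thesis by (intro that[of "Max S"]) (auto simp: cube_def)
qed

lemma cube_exit_clamp:
  fixes u w :: "int ^ 'k"
  assumes "u \<in> cube N" "w \<in> cube M" "u + w \<notin> cube N"
  obtains v where "v \<in> cube_boundary N" "v - u \<in> cube M"
proof -
  define v :: "int ^ 'k" where "v = (\<chi> j. max (- int N) (min (int N) (u $ j + w $ j)))"
  have vj: "v $ j = max (- int N) (min (int N) (u $ j + w $ j))" for j
    by (simp add: v_def)
  obtain i where i: "int N < \<bar>u $ i + w $ i\<bar>"
    using assms(3) by (auto simp: cube_def not_le)
  have "\<bar>v $ j\<bar> \<le> int N" for j
    unfolding vj by auto
  moreover have "\<bar>v $ i\<bar> = int N"
    unfolding vj using i by auto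
  ultimately have "v \<in> cube_boundary N"
    by (auto simp: cube_boundary_def cube_def)
  moreover have "\<bar>(v - u) $ j\<bar> \<le> int M" for j
  proof -
    have "\<bar>v $ j - u $ j\<bar> \<le> \<bar>w $ j\<bar>"
      using assms(1) unfolding vj by (auto simp: cube_def dest: spec[of _ j])
    then show ?thesis using assms(2) by (auto simp: cube_def dest: spec[of _ j])
  qed
  then have "v - u \<in> cube M" by (simp add: cube_def)
  ultimately show ?thesis by (rule that)
qed

lemma compact_finite_witnesses:
  fixes f :: "'i \<Rightarrow> 'b::topological_space \<Rightarrow> real"
  assumes "compact K" "\<And>u. continuous_on K (f u)" "\<And>p. p \<in> K \<Longrightarrow> \<exists>u. a < f u p"
  shows "\<exists>F. finite F \<and> (\<forall>p\<in>K. \<exists>u\<in>F. a < f u p)"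
proof -
  have "\<exists>A. open A \<and> A \<inter> K = f u -` {a<..} \<inter> K" for u
    using assms(2)[of u] open_greaterThan unfolding continuous_on_open_invariant by blast
  then obtain A where A: "\<And>u. open (A u)" "\<And>u. A u \<inter> K = f u -` {a<..} \<inter> K"
    by metis
  have cover: "K \<subseteq> (\<Union>u. A u)"
    using assms(3) A(2) by blast
  obtain F where "finite F" "K \<subseteq> (\<Union>u\<in>F. A u)"
    by (rule compactE_image[OF assms(1), of UNIV A]) (use A(1) cover in auto)
  moreover have "\<exists>u\<in>F. a < f u p" if p: "p \<in> K" for p
  proof -
    obtain u where "u \<in> F" "p \<in> A u"
      using p \<open>K \<subseteq> (\<Union>u\<in>F. A u)\<close> by blast
    then show ?thesis
      using A(2)[of u] p by blast
  qed
  ultimately show ?thesis by blast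
qed

lemma compact_finite_family_uniform_pos:
  fixes f :: "'i \<Rightarrow> 'b::topological_space \<Rightarrow> real"
  assumes "compact K" "finite W"
    and "\<And>w. w \<in> W \<Longrightarrow> continuous_on K (f w)"
    and "\<And>w p. w \<in> W \<Longrightarrow> p \<in> K \<Longrightarrow> 0 < f w p"
  shows "\<exists>\<delta>>0. \<forall>w\<in>W. \<forall>p\<in>K. \<delta> \<le> f w p"
  using assms(2,3,4)
proof (induction W rule: finite_induct)
  case empty
  show ?case by (intro exI[of _ 1]) simp
next
  case (insert w W)
  obtain \<delta> where "\<delta> > 0" "\<forall>v\<in>W. \<forall>p\<in>K. \<delta> \<le> f v p"
    using insert by blast
  moreover obtain \<epsilon> where "\<epsilon> > 0" "\<forall>p\<in>K. \<epsilon> \<le> f w p"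
  proof (cases "K = {}")
    case True
    then show ?thesis by (intro that[of 1]) auto
  next
    case False
    then obtain p0 where "p0 \<in> K" "\<forall>p\<in>K. f w p0 \<le> f w p"
      using continuous_attains_inf[OF assms(1)] insert.prems(1) by blast
    then show ?thesis using insert.prems(2) by (intro that[of "f w p0"]) auto
  qed
  ultimately show ?case
    by (intro exI[of _ "min \<delta> \<epsilon>"]) (auto simp: min_le_iff_disj)
qed

lemma continuous_on_dist_pair:
  assumes "continuous_on X f"
  shows "continuous_on (X \<times> X) (\<lambda>p. dist (f (fst p)) (f (snd p)))"
proof -
  have "continuous_on (X \<times> X) (f \<circ> fst)"
    by (rule continuous_on_compose)
      (auto intro: continuous_on_fst continuous_on_id continuous_on_subset[OF assms])
  moreover have "continuous_on (X \<times> X) (f \<circ> snd)"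
    by (rule continuous_on_compose)
      (auto intro: continuous_on_snd continuous_on_id continuous_on_subset[OF assms])
  ultimately show ?thesis by (auto intro: continuous_on_dist simp: o_def)
qed

lemma Zk_actionD:
  assumes "Zk_action X T"
  shows Zk_action_maps: "x \<in> X \<Longrightarrow> T u x \<in> X"
    and Zk_action_zero: "x \<in> X \<Longrightarrow> T 0 x = x"
    and Zk_action_add: "x \<in> X \<Longrightarrow> T (u + v) x = T u (T v x)"
    and Zk_action_continuous: "continuous_on X (T u)"
  using assms unfolding Zk_action_def by blast+

lemma Zk_action_inj_on:
  assumes "Zk_action X T"
  shows "inj_on (T w) X"
proof
  fix x y assume "x \<in> X" "y \<in> X" "T w x = T w y"
  then have "T (- w + w) x = T (- w + w) y"
    using Zk_action_add[OF assms] by metis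
  then show "x = y"
    using Zk_action_zero[OF assms] \<open>x \<in> X\<close> \<open>y \<in> X\<close> by simp
qed

lemma Zk_action_bdd_above_dist:
  assumes "compact X" "Zk_action X T" "x \<in> X" "y \<in> X"
  shows "bdd_above ((\<lambda>u. dist (T u x) (T u y)) ` S)"
proof -
  obtain B where "\<forall>x\<in>X. \<forall>y\<in>X. dist x y \<le> B"
    using compact_imp_bounded[OF assms(1)] bounded_two_points by blast
  then show ?thesis
    using Zk_action_maps[OF assms(2)] assms(3,4) by (intro bdd_aboveI[of _ B]) auto
qed

lemma dist_le_dT:
  assumes "compact X" "Zk_action X T" "x \<in> X" "y \<in> X" "u \<in> \<Omega>"
  shows "dist (T u x) (T u y) \<le> dT T \<Omega> x y"
  unfolding dT_def using assms by (intro cSUP_upper Zk_action_bdd_above_dist)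

lemma less_dT_iff:
  assumes "compact X" "Zk_action X T" "x \<in> X" "y \<in> X" "\<Omega> \<noteq> {}"
  shows "a < dT T \<Omega> x y \<longleftrightarrow> (\<exists>u\<in>\<Omega>. a < dist (T u x) (T u y))"
  unfolding dT_def by (rule less_cSUP_iff[OF assms(5) Zk_action_bdd_above_dist[OF assms(1-4)]])

definition separated_pairs :: "'a::metric_space set \<Rightarrow> real \<Rightarrow> ('a \<times> 'a) set" where
  "separated_pairs X a = {p \<in> X \<times> X. a \<le> dist (fst p) (snd p)}"

lemma compact_separated_pairs:
  assumes "compact X"
  shows "compact (separated_pairs X a)"
proof -
  have "separated_pairs X a = (X \<times> X) \<inter> {p. a \<le> dist (fst p) (snd p)}"
    by (auto simp: separated_pairs_def)
  then show ?thesis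
    by (simp only:) (intro compact_Int_closed compact_Times assms closed_Collect_le continuous_intros)
qed

lemma Zk_action_continuous_on_separated_pairs:
  assumes "Zk_action X T"
  shows "continuous_on (separated_pairs X a) (\<lambda>p. dist (T w (fst p)) (T w (snd p)))"
  using continuous_on_dist_pair[OF Zk_action_continuous[OF assms]]
  by (rule continuous_on_subset) (auto simp: separated_pairs_def)

lemma expansive_window:
  assumes "compact X" "Zk_action X T" "a > 0"
    and "\<forall>x\<in>X. \<forall>y\<in>X. x \<noteq> y \<longrightarrow> dT T UNIV x y > e"
  shows "\<exists>M. \<forall>x\<in>X. \<forall>y\<in>X. a \<le> dist x y \<longrightarrow> (\<exists>w\<in>cube M. e < dist (T w x) (T w y))"
proof -
  have witness: "\<exists>w. e < dist (T w (fst p)) (T w (snd p))" if "p \<in> separated_pairs X a" for p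
  proof -
    have X: "fst p \<in> X" "snd p \<in> X" and "fst p \<noteq> snd p"
      using that assms(3) by (auto simp: separated_pairs_def)
    then have "e < dT T UNIV (fst p) (snd p)"
      using assms(4) by blast
    then show ?thesis
      by (simp add: less_dT_iff[OF assms(1,2) X])
  qed
  have "\<exists>F. finite F \<and> (\<forall>p\<in>separated_pairs X a. \<exists>w\<in>F. e < dist (T w (fst p)) (T w (snd p)))"
    by (rule compact_finite_witnesses[OF compact_separated_pairs[OF assms(1)]
          Zk_action_continuous_on_separated_pairs[OF assms(2)] witness])
  then obtain F where "finite F"
    and F: "\<forall>p\<in>separated_pairs X a. \<exists>w\<in>F. e < dist (T w (fst p)) (T w (snd p))"
    by blast
  obtain M where "F \<subseteq> cube M"
    using finite_subset_cube[OF \<open>finite F\<close>] .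
  show ?thesis
  proof (intro exI[of _ M] ballI impI)
    fix x y assume "x \<in> X" "y \<in> X" "a \<le> dist x y"
    then have "(x, y) \<in> separated_pairs X a"
      by (simp add: separated_pairs_def)
    then obtain w where "w \<in> F" "e < dist (T w x) (T w y)"
      using F by fastforce
    then show "\<exists>w\<in>cube M. e < dist (T w x) (T w y)"
      using \<open>F \<subseteq> cube M\<close> by blast
  qed
qed

lemma Zk_action_uniformly_separating:
  assumes "compact X" "Zk_action X T" "a > 0"
  shows "\<exists>\<delta>>0. \<forall>w\<in>cube M. \<forall>x\<in>X. \<forall>y\<in>X. a \<le> dist x y \<longrightarrow> \<delta> \<le> dist (T w x) (T w y)"
proof -
  have pos: "0 < dist (T w (fst p)) (T w (snd p))" if "p \<in> separated_pairs X a" for w p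
  proof -
    have "fst p \<in> X" "snd p \<in> X" "fst p \<noteq> snd p"
      using that assms(3) by (auto simp: separated_pairs_def)
    then have "T w (fst p) \<noteq> T w (snd p)"
      using inj_onD[OF Zk_action_inj_on[OF assms(2)]] by blast
    then show ?thesis by simp
  qed
  have "\<exists>\<delta>>0. \<forall>w\<in>cube M. \<forall>p\<in>separated_pairs X a. \<delta> \<le> dist (T w (fst p)) (T w (snd p))"
    by (rule compact_finite_family_uniform_pos[OF compact_separated_pairs[OF assms(1)] finite_cube
          Zk_action_continuous_on_separated_pairs[OF assms(2)] pos])
  then show ?thesis
    by (simp add: separated_pairs_def Ball_def imp_conjL)
qed

lemma dT_cube_boundary_lower_bound:
  assumes "compact X" "Zk_action X T" "x \<in> X" "y \<in> X"
    and window: "\<forall>x\<in>X. \<forall>y\<in>X. a \<le> dist x y \<longrightarrow> (\<exists>w\<in>cube M. b < dist (T w x) (T w y))"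
    and separating: "\<forall>w\<in>cube M. \<forall>x\<in>X. \<forall>y\<in>X. a \<le> dist x y \<longrightarrow> \<delta> \<le> dist (T w x) (T w y)"
    and "a < dT T (cube N) x y" "dT T (cube N) x y \<le> b"
  shows "\<delta> \<le> dT T (cube_boundary N) x y"
proof -
  obtain u where u: "u \<in> cube N" "a < dist (T u x) (T u y)"
    using assms(7) less_dT_iff[OF assms(1-4) cube_ne_empty] by blast
  have uX: "T u x \<in> X" "T u y \<in> X"
    using Zk_action_maps[OF assms(2)] assms(3,4) by auto
  have shift: "T (v + u) z = T v (T u z)" if "z \<in> X" for v z
    using Zk_action_add[OF assms(2) that] .
  obtain w where w: "w \<in> cube M" "b < dist (T w (T u x)) (T w (T u y))"
    using window uX u(2) by fastforce
  have "u + w \<notin> cube N"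
  proof
    assume "u + w \<in> cube N"
    then have "dist (T (w + u) x) (T (w + u) y) \<le> dT T (cube N) x y"
      by (simp add: add.commute dist_le_dT[OF assms(1-4)])
    then show False using w(2) assms(8) shift assms(3,4) by simp
  qed
  then obtain v where v: "v \<in> cube_boundary N" "v - u \<in> cube M"
    using cube_exit_clamp[OF u(1) w(1)] by blast
  have "\<delta> \<le> dist (T (v - u) (T u x)) (T (v - u) (T u y))"
    using separating v(2) uX u(2) by auto
  also have "\<dots> = dist (T v x) (T v y)"
    using shift[of x "v - u"] shift[of y "v - u"] assms(3,4) by simp
  also have "\<dots> \<le> dT T (cube_boundary N) x y"
    using dist_le_dT[OF assms(1-4) v(1)] .
  finally show ?thesis .
qed

theorem lemma3p1:
  fixes X :: "'a::metric_space set" and T :: "int ^ 'k \<Rightarrow> 'a \<Rightarrow> 'a" and c :: real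
  assumes "compact X"
    and "Zk_action X T"
    and "c > 0"
    and "\<forall>x\<in>X. \<forall>y\<in>X. x \<noteq> y \<longrightarrow> dT T UNIV x y > 2 * c"
  shows "\<exists>\<delta>>0. \<forall>N::nat. \<forall>x\<in>X. \<forall>y\<in>X.
           N \<ge> 1 \<and> c \<le> dT T (cube N) x y \<and> dT T (cube N) x y \<le> 2 * c
           \<longrightarrow> dT T (cube_boundary N) x y > \<delta>"
proof -
  have "c / 2 > 0" using assms(3) by simp
  obtain M where window:
    "\<forall>x\<in>X. \<forall>y\<in>X. c / 2 \<le> dist x y \<longrightarrow> (\<exists>w\<in>cube M. 2 * c < dist (T w x) (T w y))"
    using expansive_window[OF assms(1,2) \<open>c / 2 > 0\<close> assms(4)] by blast
  obtain \<delta> where "\<delta> > 0" and separating: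
    "\<forall>w\<in>cube M. \<forall>x\<in>X. \<forall>y\<in>X. c / 2 \<le> dist x y \<longrightarrow> \<delta> \<le> dist (T w x) (T w y)"
    using Zk_action_uniformly_separating[OF assms(1,2) \<open>c / 2 > 0\<close>] by blast
  show ?thesis
  proof (intro exI[of _ "\<delta> / 2"] conjI allI ballI impI)
    fix N x y
    assume "x \<in> X" "y \<in> X"
      and bounds: "N \<ge> 1 \<and> c \<le> dT T (cube N) x y \<and> dT T (cube N) x y \<le> 2 * c"
    then have "c / 2 < dT T (cube N) x y"
      using assms(3) by linarith
    then have "\<delta> \<le> dT T (cube_boundary N) x y"
      using dT_cube_boundary_lower_bound[OF assms(1,2) \<open>x \<in> X\<close> \<open>y \<in> X\<close> window separating] bounds
      by blast
    then show "\<delta> / 2 < dT T (cube_boundary N) x y"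
      using \<open>\<delta> > 0\<close> by linarith
  qed (use \<open>\<delta> > 0\<close> in simp)
qed

end
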